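(* Let $M$ be a layered Markov Transition Model, $\pi_e$ a deterministic evaluation policy, $\Phi$ any aggregation scheme, and let the offline distribution be admissible: $\mu_h(x,a)=d_h^{\pi_b}(x;M)\pi_b(a|x)$ for all $h\in[H]$ and some policy $\pi_b$. Suppose $\frac{1}{\pi_b(\pi_e(x)|x)}\le\mathsf{C}_{\mathcal{A}}$ for all $x\in\mathcal{X}$. Then for every $\epsilon>0$ (for which the maximum defining $\bar{\mathsf{C}}_\epsilon$ is over a nonempty set), $\bar{\mathsf{C}}_\epsilon(M,\Phi,\mu)\le(\mathsf{C}_{\mathcal{A}})^H$.
   Context: Markov Transition Model $M=(\mathcal{X},\mathcal{A},T,H,\rho)$ with finite layered state space $\mathcal{X}_1\cup\dots\cup\mathcal{X}_H$, finite actions, $T(\cdot|x,a)$ supported on $\mathcal{X}_{h+1}$ for $x\in\mathcal{X}_h$, $\rho\in\Delta(\mathcal{X}_1)$. $d_h^\pi(x;M)=\Pr(x_h=x)$ under $x_1\sim\rho$, $a_h\sim\pi(\cdot|x_h)$, $x_{h+1}\sim T(\cdot|x_h,a_h)$. Aggregation scheme: $\Phi=\Phi_1\cup\dots\cup\Phi_H$, $\Phi_h$ a partition of $\mathcal{X}_h$. Aggregated transitions, for $\phi\in\Phi_h,\phi'\in\Phi_{h+1}$: $\bar T(\phi'|\phi,\pi)=\frac{\sum_{x\in\phi}\sum_{x'\in\phi'}\sum_a\pi(a|x)\mu_h(x,a)T(x'|x,a)}{\sum_{x\in\phi}\sum_a\pi(a|x)\mu_h(x,a)}$. Aggregated occupancy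 $\bar d_h^\pi(\phi)$: law of $\phi_h$ under $\phi_1\sim\bar\rho$, $\phi_{i+1}\sim\bar T(\cdot|\phi_i,\pi)$, with $\bar\rho(\phi)=\sum_{x\in\phi}\rho(x)$. Aggregated concentrability: $\bar{\mathsf{C}}_\epsilon(M,\Phi,\mu)=\max_h\max\{\frac{\sum_{\phi\in\mathcal{I}}\bar d_h^{\pi_e}(\phi)}{\sum_{\phi\in\mathcal{I}}\sum_{x\in\phi}\mu_h(x,\pi_e(x))}:\mathcal{I}\subseteq\Phi_h,\ \sum_{\phi\in\mathcal{I}}\bar d_h^{\pi_e}(\phi)\ge\epsilon\}$. *)

theory Defs
  imports Complex_Main "HOL-Library.Disjoint_Sets"
begin

text \<open>A (stochastic) policy is a function p x a = p(a|x);
transition kernel T x a x' = T(x'|x,a); initial distribution rho.\<close>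

definition layered_MTM ::
  "('x::finite \<Rightarrow> nat) \<Rightarrow> nat \<Rightarrow> ('x \<Rightarrow> 'a::finite \<Rightarrow> 'x \<Rightarrow> real) \<Rightarrow> ('x \<Rightarrow> real) \<Rightarrow> bool" where
  "layered_MTM lay H T rho \<longleftrightarrow>
     (\<forall>x. lay x \<in> {1..H}) \<and>
     (\<forall>x a x'. T x a x' \<ge> 0) \<and>
     (\<forall>x a x'. T x a x' \<noteq> 0 \<longrightarrow> lay x' = Suc (lay x)) \<and>
     (\<forall>x a. lay x < H \<longrightarrow> (\<Sum>x'\<in>UNIV. T x a x') = 1) \<and>
     (\<forall>x. rho x \<ge> 0) \<and> (\<forall>x. rho x \<noteq> 0 \<longrightarrow> lay x = 1) \<and>
     (\<Sum>x\<in>UNIV. rho x) = 1"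

definition is_policy :: "('x \<Rightarrow> 'a::finite \<Rightarrow> real) \<Rightarrow> bool" where
  "is_policy p \<longleftrightarrow> (\<forall>x a. p x a \<ge> 0) \<and> (\<forall>x. (\<Sum>a\<in>UNIV. p x a) = 1)"

definition det_policy :: "('x \<Rightarrow> 'a) \<Rightarrow> 'x \<Rightarrow> 'a \<Rightarrow> real" where
  "det_policy pe x a = (if a = pe x then 1 else 0)"

text \<open>Occupancy d_h^p(x;M), layers indexed from 1 (index 0 unused, set to 0).\<close>
fun occ :: "('x::finite \<Rightarrow> 'a::finite \<Rightarrow> 'x \<Rightarrow> real) \<Rightarrow> ('x \<Rightarrow> real) \<Rightarrow>
            ('x \<Rightarrow> 'a \<Rightarrow> real) \<Rightarrow> nat \<Rightarrow> 'x \<Rightarrow> real" where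
  "occ T rho p 0 x' = 0"
| "occ T rho p (Suc 0) x' = rho x'"
| "occ T rho p (Suc (Suc h)) x' =
     (\<Sum>x\<in>UNIV. \<Sum>a\<in>UNIV. occ T rho p (Suc h) x * p x a * T x a x')"

text \<open>Aggregated transition \<bar>T(phi'|phi,p) at layer h (division by 0 yields 0).\<close>
definition agg_trans :: "('x::finite \<Rightarrow> 'a::finite \<Rightarrow> 'x \<Rightarrow> real) \<Rightarrow>
     (nat \<Rightarrow> 'x \<Rightarrow> 'a \<Rightarrow> real) \<Rightarrow> ('x \<Rightarrow> 'a \<Rightarrow> real) \<Rightarrow> nat \<Rightarrow> 'x set \<Rightarrow> 'x set \<Rightarrow> real" where
  "agg_trans T mu p h phi phi' =
     (\<Sum>x\<in>phi. \<Sum>x'\<in>phi'. \<Sum>a\<in>UNIV. p x a * mu h x a * T x a x') /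
     (\<Sum>x\<in>phi. \<Sum>a\<in>UNIV. p x a * mu h x a)"

text \<open>Aggregated occupancy \<bar>d_h^p(phi), layers indexed from 1.\<close>
fun agg_occ :: "('x::finite \<Rightarrow> 'a::finite \<Rightarrow> 'x \<Rightarrow> real) \<Rightarrow> ('x \<Rightarrow> real) \<Rightarrow>
     (nat \<Rightarrow> 'x set set) \<Rightarrow> (nat \<Rightarrow> 'x \<Rightarrow> 'a \<Rightarrow> real) \<Rightarrow> ('x \<Rightarrow> 'a \<Rightarrow> real) \<Rightarrow>
     nat \<Rightarrow> 'x set \<Rightarrow> real" where
  "agg_occ T rho Phi mu p 0 phi' = 0"
| "agg_occ T rho Phi mu p (Suc 0) phi' = (\<Sum>x\<in>phi'. rho x)"
| "agg_occ T rho Phi mu p (Suc (Suc h)) phi' =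
     (\<Sum>phi\<in>Phi (Suc h). agg_occ T rho Phi mu p (Suc h) phi * agg_trans T mu p (Suc h) phi phi')"

definition aggregation_scheme :: "('x \<Rightarrow> nat) \<Rightarrow> nat \<Rightarrow> (nat \<Rightarrow> 'x set set) \<Rightarrow> bool" where
  "aggregation_scheme lay H Phi \<longleftrightarrow> (\<forall>h\<in>{1..H}. partition_on {x. lay x = h} (Phi h))"

definition agg_conc_set :: "('x::finite \<Rightarrow> 'a::finite \<Rightarrow> 'x \<Rightarrow> real) \<Rightarrow> ('x \<Rightarrow> real) \<Rightarrow> nat \<Rightarrow>
     (nat \<Rightarrow> 'x set set) \<Rightarrow> (nat \<Rightarrow> 'x \<Rightarrow> 'a \<Rightarrow> real) \<Rightarrow> ('x \<Rightarrow> 'a) \<Rightarrow> real \<Rightarrow> real set" where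
  "agg_conc_set T rho H Phi mu pe eps =
     {(\<Sum>phi\<in>I. agg_occ T rho Phi mu (det_policy pe) h phi) /
      (\<Sum>phi\<in>I. \<Sum>x\<in>phi. mu h x (pe x)) | h I.
        h \<in> {1..H} \<and> I \<subseteq> Phi h \<and>
        (\<Sum>phi\<in>I. agg_occ T rho Phi mu (det_policy pe) h phi) \<ge> eps}"

definition agg_conc :: "('x::finite \<Rightarrow> 'a::finite \<Rightarrow> 'x \<Rightarrow> real) \<Rightarrow> ('x \<Rightarrow> real) \<Rightarrow> nat \<Rightarrow>
     (nat \<Rightarrow> 'x set set) \<Rightarrow> (nat \<Rightarrow> 'x \<Rightarrow> 'a \<Rightarrow> real) \<Rightarrow> ('x \<Rightarrow> 'a) \<Rightarrow> real \<Rightarrow> real" where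
  "agg_conc T rho H Phi mu pe eps = Max (agg_conc_set T rho H Phi mu pe eps)"

end

theory Submission
  imports Defs
begin

text \<open>Write \<open>D\<^sub>h(\<phi>)\<close> for the mass of the behaviour occupancy \<open>d\<^sup>\<pi>\<^sup>b\<^sub>h\<close> on the cell \<open>\<phi>\<close> and
  \<open>w\<^sub>h(\<phi>) = \<Sum>\<^sub>x\<^sub>\<in>\<^sub>\<phi> \<mu>\<^sub>h(x,\<pi>\<^sub>e(x))\<close>; coverage gives \<open>D\<^sub>h(\<phi>) \<le> C w\<^sub>h(\<phi>)\<close>. The aggregated
  transition out of \<open>\<phi>\<close> divides the \<open>\<mu>\<close>-weighted \<open>\<pi>\<^sub>e\<close>-flow out of \<open>\<phi>\<close> by \<open>w\<^sub>h(\<phi>)\<close>, and the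
  \<open>\<pi>\<^sub>e\<close>-flow out of all cells into a cell \<open>\<phi>'\<close> is dominated by the \<open>\<pi>\<^sub>b\<close>-flow, which is
  \<open>D\<^sub>h\<^sub>+\<^sub>1(\<phi>')\<close>. Hence \<open>d\<^sub>h(\<phi>) \<le> C\<^sup>h\<^sup>-\<^sup>1 D\<^sub>h(\<phi>) \<le> C\<^sup>h w\<^sub>h(\<phi>)\<close> by induction on \<open>h\<close>, so every ratio in
  the concentrability coefficient is at most \<open>C\<^sup>h \<le> C\<^sup>H\<close>, using \<open>C \<ge> 1\<close>.\<close>

lemma sum_det_policy:
  fixes g :: "'a::finite \<Rightarrow> real"
  shows "(\<Sum>a\<in>UNIV. det_policy pe x a * g a) = g (pe x)"
proof -
  have "det_policy pe x a * g a = (if a = pe x then g a else 0)" for a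
    by (simp add: det_policy_def)
  then show ?thesis by simp
qed

lemma occ_nonneg:
  assumes "\<forall>x. 0 \<le> rho x" "\<forall>x a x'. 0 \<le> T x a x'" "\<forall>x a. 0 \<le> p x a"
  shows "0 \<le> occ T rho p h x"
  using assms by (induction T rho p h x rule: occ.induct) (auto intro!: sum_nonneg)

lemma sum_occ_Suc:
  "(\<Sum>x'\<in>A. occ T rho p (Suc (Suc h)) x')
     = (\<Sum>x\<in>UNIV. occ T rho p (Suc h) x * (\<Sum>a\<in>UNIV. p x a * (\<Sum>x'\<in>A. T x a x')))"
proof -
  have "(\<Sum>x'\<in>A. occ T rho p (Suc (Suc h)) x')
      = (\<Sum>x\<in>UNIV. \<Sum>a\<in>UNIV. \<Sum>x'\<in>A. occ T rho p (Suc h) x * p x a * T x a x')"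
    by (simp add: sum.swap[of _ A] sum.swap[of _ A UNIV])
  then show ?thesis
    by (simp add: sum_distrib_left mult.assoc)
qed

lemma occ_det_step_le:
  assumes "\<forall>x. 0 \<le> rho x" "\<forall>x a x'. 0 \<le> T x a x'" "\<forall>x a. 0 \<le> p x a"
  shows "(\<Sum>x\<in>UNIV. occ T rho p (Suc h) x * p x (pe x) * (\<Sum>x'\<in>A. T x (pe x) x'))
           \<le> (\<Sum>x'\<in>A. occ T rho p (Suc (Suc h)) x')"
  unfolding sum_occ_Suc mult.assoc
proof (rule sum_mono, rule mult_left_mono)
  fix x
  show "p x (pe x) * (\<Sum>x'\<in>A. T x (pe x) x') \<le> (\<Sum>a\<in>UNIV. p x a * (\<Sum>x'\<in>A. T x a x'))"
    using assms by (intro member_le_sum) (auto intro!: sum_nonneg mult_nonneg_nonneg)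
  show "0 \<le> occ T rho p (Suc h) x"
    using occ_nonneg[OF assms] .
qed

lemma sum_disjoint_family_le:
  fixes f :: "'x::finite \<Rightarrow> real"
  assumes "disjoint P" "\<forall>x. 0 \<le> f x"
  shows "(\<Sum>phi\<in>P. \<Sum>x\<in>phi. f x) \<le> (\<Sum>x\<in>UNIV. f x)"
proof -
  have "(\<Sum>phi\<in>P. \<Sum>x\<in>phi. f x) = (\<Sum>x\<in>\<Union>P. f x)"
    using assms(1) by (subst sum.Union_disjoint) (auto simp: disjoint_def)
  also have "\<dots> \<le> (\<Sum>x\<in>UNIV. f x)"
    using assms(2) by (intro sum_mono2) auto
  finally show ?thesis .
qed

lemma agg_trans_det_policy:
  "agg_trans T mu (det_policy pe) h phi phi'
     = (\<Sum>x\<in>phi. mu h x (pe x) * (\<Sum>x'\<in>phi'. T x (pe x) x')) / (\<Sum>x\<in>phi. mu h x (pe x))"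
  unfolding agg_trans_def mult.assoc
  by (simp add: sum_det_policy[where g = "\<lambda>a. mu _ _ a * T _ a _"] sum_distrib_left
      sum_det_policy[where g = "mu _ _"])

lemma mult_divide_le_of_le_mult:
  fixes a c w N :: real
  assumes "a \<le> c * w" "0 \<le> c" "0 \<le> w" "0 \<le> N"
  shows "a * (N / w) \<le> c * N"
proof (cases "w = 0")
  case False
  have "a * (N / w) \<le> c * w * (N / w)"
    using assms by (intro mult_right_mono) auto
  with False show ?thesis by simp
qed (use assms in simp)

lemma occ_mass_le_weight:
  assumes "\<forall>x a. mu h x a = occ T rho pb h x * pb x a" "\<forall>x. 1 \<le> CA * pb x (pe x)"
    and "\<forall>x. 0 \<le> occ T rho pb h x"
  shows "(\<Sum>x\<in>phi. occ T rho pb h x) \<le> CA * (\<Sum>x\<in>phi. mu h x (pe x))"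
  unfolding sum_distrib_left
proof (rule sum_mono)
  fix x
  have "occ T rho pb h x * 1 \<le> occ T rho pb h x * (CA * pb x (pe x))"
    using assms by (intro mult_left_mono) auto
  then show "occ T rho pb h x \<le> CA * mu h x (pe x)"
    using assms(1) by (simp add: algebra_simps)
qed

lemma agg_occ_det_le_occ_mass:
  assumes rho0: "\<forall>x. 0 \<le> rho x" and T0: "\<forall>x a x'. 0 \<le> T x a x'" and pb0: "\<forall>x a. 0 \<le> pb x a"
    and disj: "\<forall>h\<in>{1..H}. disjoint (Phi h)"
    and mu: "\<forall>h\<in>{1..H}. \<forall>x a. mu h x a = occ T rho pb h x * pb x a"
    and cover: "\<forall>x. 1 \<le> CA * pb x (pe x)" and CA0: "0 \<le> CA"
    and "Suc n \<le> H"
  shows "agg_occ T rho Phi mu (det_policy pe) (Suc n) phi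
           \<le> CA ^ n * (\<Sum>x\<in>phi. occ T rho pb (Suc n) x)"
  using \<open>Suc n \<le> H\<close>
proof (induction n arbitrary: phi)
  case (Suc n)
  let ?h = "Suc n"
  have hH: "?h \<in> {1..H}" using Suc.prems by simp
  have occ0: "\<forall>x. 0 \<le> occ T rho pb h x" for h using occ_nonneg[OF rho0 T0 pb0] by blast
  define w where "w psi = (\<Sum>x\<in>psi. mu ?h x (pe x))" for psi
  define N where "N psi = (\<Sum>x\<in>psi. mu ?h x (pe x) * (\<Sum>x'\<in>phi. T x (pe x) x'))" for psi
  have mu_h: "\<forall>x a. mu ?h x a = occ T rho pb ?h x * pb x a" using mu hH by blast
  have mu0: "0 \<le> mu ?h x a" for x a using mu_h occ0 pb0 by simp
  have agg_le_weight: "agg_occ T rho Phi mu (det_policy pe) ?h psi \<le> CA ^ ?h * w psi" for psi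
  proof -
    have "agg_occ T rho Phi mu (det_policy pe) ?h psi \<le> CA ^ n * (\<Sum>x\<in>psi. occ T rho pb ?h x)"
      using Suc by simp
    also have "\<dots> \<le> CA ^ n * (CA * w psi)"
      unfolding w_def using occ_mass_le_weight[of mu ?h T rho pb CA pe, OF mu_h cover occ0] CA0
      by (intro mult_left_mono) auto
    finally show ?thesis by (simp add: mult_ac)
  qed
  have "agg_occ T rho Phi mu (det_policy pe) (Suc ?h) phi
      = (\<Sum>psi\<in>Phi ?h. agg_occ T rho Phi mu (det_policy pe) ?h psi * (N psi / w psi))"
    by (simp add: agg_trans_det_policy N_def w_def)
  also have "\<dots> \<le> (\<Sum>psi\<in>Phi ?h. CA ^ ?h * N psi)"
    using agg_le_weight mu0 T0 CA0
    by (intro sum_mono mult_divide_le_of_le_mult)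
       (auto simp: w_def N_def intro!: sum_nonneg mult_nonneg_nonneg)
  also have "\<dots> \<le> CA ^ ?h * (\<Sum>x\<in>UNIV. mu ?h x (pe x) * (\<Sum>x'\<in>phi. T x (pe x) x'))"
    unfolding sum_distrib_left[symmetric] N_def
    using disj hH mu0 T0 CA0
    by (intro mult_left_mono sum_disjoint_family_le) (auto intro!: sum_nonneg mult_nonneg_nonneg)
  also have "\<dots> \<le> CA ^ ?h * (\<Sum>x\<in>phi. occ T rho pb (Suc ?h) x)"
    using occ_det_step_le[OF rho0 T0 pb0, of n pe phi] mu_h CA0
    by (intro mult_left_mono) auto
  finally show ?case .
qed simp

lemma agg_conc_set_finite:
  "finite (agg_conc_set T rho H Phi mu pe eps)"
proof (rule finite_subset)
  show "agg_conc_set T rho H Phi mu pe eps \<subseteq>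
      (\<lambda>(h, I). (\<Sum>phi\<in>I. agg_occ T rho Phi mu (det_policy pe) h phi) /
                (\<Sum>phi\<in>I. \<Sum>x\<in>phi. mu h x (pe x))) ` ({1..H} \<times> UNIV)"
    unfolding agg_conc_set_def by (auto simp: image_iff)
qed auto

lemma one_le_of_coverage:
  assumes "is_policy pb" "\<forall>x. 1 \<le> CA * pb x (pe x)"
  shows "1 \<le> (CA :: real)"
proof -
  fix x
  have "pb x (pe x) \<le> 1"
    using assms(1) member_le_sum[of "pe x" UNIV "pb x"] by (simp add: is_policy_def)
  moreover have "0 \<le> pb x (pe x)"
    using assms(1) by (simp add: is_policy_def)
  moreover have "1 \<le> CA * pb x (pe x)"
    using assms(2) by blast
  ultimately show ?thesis
    using mult_left_le[of "pb x (pe x)" CA] mult_nonpos_nonneg[of CA "pb x (pe x)"]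
    by (cases "0 \<le> CA") auto
qed

lemma agg_conc_set_le:
  assumes rho0: "\<forall>x. 0 \<le> rho x" and T0: "\<forall>x a x'. 0 \<le> T x a x'" and pb0: "\<forall>x a. 0 \<le> pb x a"
    and disj: "\<forall>h\<in>{1..H}. disjoint (Phi h)"
    and mu: "\<forall>h\<in>{1..H}. \<forall>x a. mu h x a = occ T rho pb h x * pb x a"
    and cover: "\<forall>x. 1 \<le> CA * pb x (pe x)" and CA1: "1 \<le> CA"
    and "r \<in> agg_conc_set T rho H Phi mu pe eps"
  shows "r \<le> CA ^ H"
proof -
  obtain h I where hH: "h \<in> {1..H}"
    and r: "r = (\<Sum>phi\<in>I. agg_occ T rho Phi mu (det_policy pe) h phi) /
                (\<Sum>phi\<in>I. \<Sum>x\<in>phi. mu h x (pe x))"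
    using \<open>r \<in> _\<close> unfolding agg_conc_set_def by blast
  obtain n where h: "h = Suc n" using hH by (cases h) auto
  have occ0: "\<forall>x. 0 \<le> occ T rho pb h x" using occ_nonneg[OF rho0 T0 pb0] by blast
  have mu_h: "\<forall>x a. mu h x a = occ T rho pb h x * pb x a" using mu hH by blast
  have weight0: "0 \<le> (\<Sum>phi\<in>I. \<Sum>x\<in>phi. mu h x (pe x))"
    using mu_h occ0 pb0 by (auto intro!: sum_nonneg)
  have "(\<Sum>phi\<in>I. agg_occ T rho Phi mu (det_policy pe) h phi)
      \<le> (\<Sum>phi\<in>I. CA ^ n * (\<Sum>x\<in>phi. occ T rho pb h x))"
    using agg_occ_det_le_occ_mass[OF rho0 T0 pb0 disj mu cover] CA1 hH h
    by (intro sum_mono) auto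
  also have "\<dots> \<le> (\<Sum>phi\<in>I. CA ^ n * (CA * (\<Sum>x\<in>phi. mu h x (pe x))))"
    using occ_mass_le_weight[of mu h T rho pb CA pe, OF mu_h cover occ0] CA1
    by (intro sum_mono mult_left_mono) auto
  also have "\<dots> = CA ^ h * (\<Sum>phi\<in>I. \<Sum>x\<in>phi. mu h x (pe x))"
    by (simp add: h sum_distrib_left mult_ac)
  finally have "r \<le> CA ^ h"
    using r weight0 CA1 by (cases "(\<Sum>phi\<in>I. \<Sum>x\<in>phi. mu h x (pe x)) = 0")
      (auto simp: divide_le_eq)
  also have "\<dots> \<le> CA ^ H"
    using hH CA1 by (intro power_increasing) auto
  finally show ?thesis .
qed

theorem mainTheorem9:
  fixes lay :: "'x::finite \<Rightarrow> nat" and H :: nat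
    and T :: "'x \<Rightarrow> 'a::finite \<Rightarrow> 'x \<Rightarrow> real" and rho :: "'x \<Rightarrow> real"
    and pe :: "'x \<Rightarrow> 'a" and Phi :: "nat \<Rightarrow> 'x set set"
    and mu :: "nat \<Rightarrow> 'x \<Rightarrow> 'a \<Rightarrow> real" and pb :: "'x \<Rightarrow> 'a \<Rightarrow> real"
    and CA eps :: real
  assumes "layered_MTM lay H T rho"
    and "aggregation_scheme lay H Phi"
    and "is_policy pb"
    and "\<forall>h\<in>{1..H}. \<forall>x a. mu h x a = occ T rho pb h x * pb x a"
    and "\<forall>x. pb x (pe x) > 0 \<and> 1 / pb x (pe x) \<le> CA"
    and "eps > 0"
    and "agg_conc_set T rho H Phi mu pe eps \<noteq> {}"
  shows "agg_conc T rho H Phi mu pe eps \<le> CA ^ H"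
proof -
  have rho0: "\<forall>x. 0 \<le> rho x" and T0: "\<forall>x a x'. 0 \<le> T x a x'"
    using assms(1) by (auto simp: layered_MTM_def)
  have pb0: "\<forall>x a. 0 \<le> pb x a"
    using assms(3) by (simp add: is_policy_def)
  have disj: "\<forall>h\<in>{1..H}. disjoint (Phi h)"
    using assms(2) by (auto simp: aggregation_scheme_def partition_on_def)
  have cover: "\<forall>x. 1 \<le> CA * pb x (pe x)"
    using assms(5) by (auto simp: divide_le_eq mult.commute)
  have "1 \<le> CA" using one_le_of_coverage[OF assms(3) cover] .
  then show ?thesis
    unfolding agg_conc_def
    using agg_conc_set_le[OF rho0 T0 pb0 disj assms(4) cover]
    by (intro Max.boundedI agg_conc_set_finite assms(7))
qed

end
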